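(* Let $\mathfrak n=\mathfrak v\oplus\mathfrak z$ be a Lie algebra of Heisenberg type with $\mathfrak z=\mathbb R^m$. Then every Lagrangian subspace $\mathcal L\subset\mathfrak v$ is a $C^+(m)$-submodule of $\mathfrak v$, i.e. $J_zJ_w(\mathcal L)\subset\mathcal L$ for all $z,w\in\mathfrak z$.
   Context: Lie algebra of Heisenberg type: $\mathfrak z=\mathbb R^m$ with standard inner product $\langle\cdot,\cdot\rangle$; $\mathfrak v$ is a finite-dimensional real module over the Clifford algebra $C(m)$ (relations $z^2=-\langle z,z\rangle 1$) with an inner product $(\cdot,\cdot)$ for which each $J_z$ is skew-symmetric; $\mathfrak z$ is central and $\langle z,[u,v]\rangle=(J_zu,v)$ for $u,v\in\mathfrak v$. $C^+(m)$ is the even Clifford subalgebra, generated by products $zw$ of two elements of $\mathbb R^m$. A Lagrangian subspace is a subspace $\mathcal L\subset\mathfrak v$ with $[\mathcal L,\mathcal L]=0$ and $\dim\mathcal L=\frac12\dim\mathfrak v$. *)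

theory Defs
  imports "HOL-Analysis.Analysis"
begin

text \<open>Lie algebra of Heisenberg type n = v + z with z = R^m (type real^'m, standard inner
product) and v a finite-dimensional real inner product space (type 'v :: euclidean_space).
J z is the Clifford action of z on v.\<close>

definition heisenberg_type :: "(real^'m \<Rightarrow> 'v::euclidean_space \<Rightarrow> 'v) \<Rightarrow> bool" where
  "heisenberg_type J \<longleftrightarrow>
     (\<forall>u. linear (\<lambda>z. J z u)) \<and>
     (\<forall>z. linear (J z)) \<and>
     (\<forall>z u. J z (J z u) = - (z \<bullet> z) *\<^sub>R u) \<and>
     (\<forall>z u w. (J z u) \<bullet> w = - (u \<bullet> J z w))"

text \<open>The bracket [u,w] \<in> z, characterised by <z,[u,w]> = (J z u, w).\<close>
definition lie_br :: "(real^'m \<Rightarrow> 'v::euclidean_space \<Rightarrow> 'v) \<Rightarrow> 'v \<Rightarrow> 'v \<Rightarrow> real^'m" where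
  "lie_br J u w = (\<Sum>b\<in>Basis. ((J b u) \<bullet> w) *\<^sub>R b)"

definition lagrangian :: "(real^'m \<Rightarrow> 'v::euclidean_space \<Rightarrow> 'v) \<Rightarrow> 'v set \<Rightarrow> bool" where
  "lagrangian J L \<longleftrightarrow> subspace L \<and> (\<forall>u\<in>L. \<forall>w\<in>L. lie_br J u w = 0)
     \<and> 2 * dim L = DIM('v)"

end

theory Submission
  imports Defs
begin

text \<open>The bracket condition \<open>[L, L] = 0\<close> says exactly that every \<open>J\<^sub>z\<close> maps \<open>L\<close> into its
orthogonal complement. For \<open>z \<noteq> 0\<close> the map \<open>J\<^sub>z\<close> is injective, since \<open>J\<^sub>z\<^sup>2 = -|z|\<^sup>2\<close>,
and \<open>L\<^sup>\<bottom>\<close> has the same dimension as \<open>L\<close>; hence \<open>J\<^sub>z L = L\<^sup>\<bottom>\<close>. So for \<open>u \<in> L\<close> we can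
write \<open>J\<^sub>w u = J\<^sub>z l\<close> with \<open>l \<in> L\<close>, and then \<open>J\<^sub>z J\<^sub>w u = -|z|\<^sup>2 l \<in> L\<close>.\<close>

lemma inner_lie_br:
  assumes "linear (\<lambda>z. J z u)"
  shows "lie_br J u w \<bullet> z = J z u \<bullet> w"
proof -
  have "J z u = J (\<Sum>b\<in>Basis. (z \<bullet> b) *\<^sub>R b) u"
    by (simp add: euclidean_representation)
  also have "\<dots> = (\<Sum>b\<in>Basis. (z \<bullet> b) *\<^sub>R J b u)"
    by (simp add: linear_sum[OF assms, simplified] linear_scale[OF assms, simplified])
  finally show ?thesis
    by (simp add: lie_br_def inner_sum_left inner_sum_right inner_commute mult.commute)
qed

lemma heisenberg_type_inj:
  assumes "heisenberg_type J" and "z \<noteq> 0"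
  shows "inj (J z)"
proof -
  have lin: "linear (J z)" and sq: "\<And>u. J z (J z u) = - (z \<bullet> z) *\<^sub>R u"
    using assms(1) by (auto simp: heisenberg_type_def)
  have "u = 0" if "J z u = 0" for u
    using sq[of u] that linear_0[OF lin] assms(2) by simp
  then show ?thesis
    using linear_inj_iff_eq_0[OF lin] by blast
qed

lemma lagrangian_image_subset_orthogonal_comp:
  assumes "heisenberg_type J" and "lagrangian J L"
  shows "J z ` L \<subseteq> L\<^sup>\<bottom>"
proof -
  have "J z u \<bullet> w = 0" if "u \<in> L" "w \<in> L" for u w
  proof -
    have "linear (\<lambda>z. J z u)"
      using assms(1) by (simp add: heisenberg_type_def)
    then have "J z u \<bullet> w = lie_br J u w \<bullet> z"
      by (simp add: inner_lie_br)
    also have "\<dots> = 0"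
      using assms(2) that by (simp add: lagrangian_def)
    finally show ?thesis .
  qed
  then show ?thesis
    by (auto simp: orthogonal_comp_def orthogonal_def inner_commute)
qed

lemma dim_orthogonal_comp:
  fixes L :: "'a::euclidean_space set"
  assumes "subspace L"
  shows "dim (L\<^sup>\<bottom>) + dim L = DIM('a)"
  using dim_subspace_orthogonal_to_vectors[OF assms subspace_UNIV]
  by (simp add: orthogonal_comp_def)

lemma lagrangian_image_eq_orthogonal_comp:
  fixes J :: "real^'m \<Rightarrow> 'v::euclidean_space \<Rightarrow> 'v"
  assumes "heisenberg_type J" and "lagrangian J L" and "z \<noteq> 0"
  shows "J z ` L = L\<^sup>\<bottom>"
proof (rule subspace_dim_equal)
  have lin: "linear (J z)" and L: "subspace L" "2 * dim L = DIM('v)"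
    using assms(1,2) by (auto simp: heisenberg_type_def lagrangian_def)
  show "subspace (J z ` L)"
    using lin L(1) by (rule linear_subspace_image)
  show "subspace (L\<^sup>\<bottom>)"
    by (rule subspace_orthogonal_comp)
  show "J z ` L \<subseteq> L\<^sup>\<bottom>"
    using assms(1,2) by (rule lagrangian_image_subset_orthogonal_comp)
  have "dim (J z ` L) = dim L"
    using dim_image_eq[OF lin] heisenberg_type_inj[OF assms(1,3)] inj_on_subset by blast
  then show "dim (L\<^sup>\<bottom>) \<le> dim (J z ` L)"
    using dim_orthogonal_comp[OF L(1)] L(2) by simp
qed

theorem corollary4p2:
  fixes J :: "real^'m \<Rightarrow> 'v::euclidean_space \<Rightarrow> 'v" and L :: "'v set"
  assumes "heisenberg_type J"
    and "lagrangian J L"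
  shows "\<forall>z w. \<forall>u\<in>L. J z (J w u) \<in> L"
proof (intro allI ballI)
  fix z w u assume u: "u \<in> L"
  have L: "subspace L"
    using assms(2) by (simp add: lagrangian_def)
  show "J z (J w u) \<in> L"
  proof (cases "z = 0")
    case True
    have "linear (\<lambda>z. J z (J w u))"
      using assms(1) by (simp add: heisenberg_type_def)
    then show ?thesis
      using True linear_0 subspace_0[OF L] by fastforce
  next
    case False
    have "J w u \<in> J z ` L"
      using lagrangian_image_subset_orthogonal_comp[OF assms] u
        lagrangian_image_eq_orthogonal_comp[OF assms False] by blast
    then obtain l where "l \<in> L" and "J w u = J z l" by blast
    then have "J z (J w u) = - (z \<bullet> z) *\<^sub>R l"
      using assms(1) by (simp add: heisenberg_type_def)
    then show ?thesis
      using subspace_scale[OF L \<open>l \<in> L\<close>, of "- (z \<bullet> z)"] by simp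
  qed
qed

end
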